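(* Fix $\alpha\ge1$, $c>0$. For $t\ge0$ let $\Lambda_t$ be the qubit Pauli channel $\Lambda_t[\rho]=\sum_{\mu=0}^3p_\mu(t)\sigma_\mu\rho\sigma_\mu$ ($\sigma_0=\mathbb 1$, $\sigma_{1,2,3}$ the Pauli matrices) with $p_0(t)=\tfrac14[1+e^{-2\alpha ct}(1+2e^{\alpha ct}\cosh^\alpha(ct))]$, $p_1(t)=p_2(t)=\tfrac14(1-e^{-2\alpha ct})$, $p_3(t)=\tfrac14[1+e^{-2\alpha ct}(1-2e^{\alpha ct}\cosh^\alpha(ct))]$ (the solution of $\dot\rho=\sum_i\gamma_i(t)(\sigma_i\rho\sigma_i-\rho)$ with $\gamma_1=\gamma_2=\alpha c/2$, $\gamma_3(t)=-\tfrac{\alpha c}{2}\tanh(ct)$). Each $\Lambda_t$ is invertible; for $0\le s\le t$ set $V_{t,s}=\Lambda_t\circ\Lambda_s^{-1}$ and $\Omega_{V_{t,s}}=2(V_{t,s}\otimes\mathrm{id})[|\Phi^+\rangle\langle\Phi^+|]$. Then, with $\lambda_\tau=e^{-c\tau}$ and $\Gamma_{t,s}=\lambda_{t-s}\cosh(ct)\,\mathrm{sech}(cs)$, $$\Omega_{V_{t,s}}=p_1P_{\Phi^+}+p_2P_{\Phi^-}+(1-p_1-p_2)P_{\Psi^+}^{T_B},\qquad p_1=\tfrac12(\lambda_{t-s}^{2\alpha}+\Gamma_{t,s}^\alpha),\ p_2=\tfrac12(1-\Gamma_{t,s}^\alpha),$$ where $p_1\ge0$, $p_2\ge0$, $p_1+p_2\le1$.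 Consequently $V_{t,s}[X]=p\,\mathcal E_1[X]+(1-p)\,\mathcal E_2[X^T]$ for some $p\in[0,1]$ and CPTP qubit maps $\mathcal E_1,\mathcal E_2$.
   Context: $|\Phi^\pm\rangle=(|00\rangle\pm|11\rangle)/\sqrt2$, $|\Psi^\pm\rangle=(|01\rangle\pm|10\rangle)/\sqrt2$, $P_\psi=2|\psi\rangle\langle\psi|$, and $T_B$ denotes partial transposition on the second qubit. *)

theory Defs
  imports "HOL-Analysis.Analysis"
begin

text \<open>Qubit operators: 2x2 complex matrices, M $ i $ j = row i, column j.
  Two-qubit operators: matrices indexed by 2 \<times> 2, index (a,b) = |a b>,
  first component = first qubit (system), second = second qubit (B).\<close>

type_synonym qmat = "complex^2^2"
type_synonym qqmat = "complex^(2 \<times> 2)^(2 \<times> 2)"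

definition sigma :: "nat \<Rightarrow> qmat" where
  "sigma \<mu> =
    (if \<mu> = 0 then (\<chi> i j. if i = j then 1 else 0)
     else if \<mu> = 1 then (\<chi> i j. if i \<noteq> j then 1 else 0)
     else if \<mu> = 2 then (\<chi> i j. if i = 0 \<and> j = 1 then - \<i> else if i = 1 \<and> j = 0 then \<i> else 0)
     else (\<chi> i j. if i = j then (if i = 0 then 1 else -1) else 0))"

definition pauli_p :: "real \<Rightarrow> real \<Rightarrow> nat \<Rightarrow> real \<Rightarrow> real" where
  "pauli_p \<alpha> c \<mu> t =
    (if \<mu> = 0 then (1 + exp (-2*\<alpha>*c*t) * (1 + 2 * exp (\<alpha>*c*t) * cosh (c*t) powr \<alpha>)) / 4
     else if \<mu> = 1 \<or> \<mu> = 2 then (1 - exp (-2*\<alpha>*c*t)) / 4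
     else (1 + exp (-2*\<alpha>*c*t) * (1 - 2 * exp (\<alpha>*c*t) * cosh (c*t) powr \<alpha>)) / 4)"

definition Lambda :: "real \<Rightarrow> real \<Rightarrow> real \<Rightarrow> qmat \<Rightarrow> qmat" where
  "Lambda \<alpha> c t \<rho> = (\<Sum>\<mu><4. pauli_p \<alpha> c \<mu> t *\<^sub>R (sigma \<mu> ** \<rho> ** sigma \<mu>))"

definition cscale :: "complex \<Rightarrow> qmat \<Rightarrow> qmat" where
  "cscale a M = (\<chi> i j. a * M $ i $ j)"

text \<open>(E \<otimes> id) acting on two-qubit operators (E on the first qubit).\<close>
definition map_id :: "(qmat \<Rightarrow> qmat) \<Rightarrow> qqmat \<Rightarrow> qqmat" where
  "map_id E X = (\<chi> x y. E (\<chi> i j. X $ (i, snd x) $ (j, snd y)) $ fst x $ fst y)"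

definition Phi_p :: "complex^(2 \<times> 2)" where
  "Phi_p = (\<chi> x. if fst x = snd x then 1 / complex_of_real (sqrt 2) else 0)"
definition Phi_m :: "complex^(2 \<times> 2)" where
  "Phi_m = (\<chi> x. if fst x = snd x then (if fst x = 0 then 1 else -1) / complex_of_real (sqrt 2) else 0)"
definition Psi_p :: "complex^(2 \<times> 2)" where
  "Psi_p = (\<chi> x. if fst x \<noteq> snd x then 1 / complex_of_real (sqrt 2) else 0)"
definition Psi_m :: "complex^(2 \<times> 2)" where
  "Psi_m = (\<chi> x. if fst x \<noteq> snd x then (if fst x = 0 then 1 else -1) / complex_of_real (sqrt 2) else 0)"

definition proj :: "complex^(2 \<times> 2) \<Rightarrow> qqmat" where
  "proj \<psi> = (\<chi> x y. 2 * \<psi> $ x * cnj (\<psi> $ y))"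

definition ptrans :: "qqmat \<Rightarrow> qqmat" where
  "ptrans X = (\<chi> x y. X $ (fst x, snd y) $ (fst y, snd x))"

definition choi :: "(qmat \<Rightarrow> qmat) \<Rightarrow> qqmat" where
  "choi E = map_id E (proj Phi_p)"

definition psd :: "complex^'n^'n \<Rightarrow> bool" where
  "psd M \<longleftrightarrow> (\<forall>v. let q = (\<Sum>i\<in>UNIV. \<Sum>j\<in>UNIV. cnj (v $ i) * M $ i $ j * v $ j)
                    in Im q = 0 \<and> Re q \<ge> 0)"

definition qlinear :: "(qmat \<Rightarrow> qmat) \<Rightarrow> bool" where
  "qlinear E \<longleftrightarrow> (\<forall>a X Y. E (X + Y) = E X + E Y \<and> E (cscale a X) = cscale a (E X))"

definition CPTP :: "(qmat \<Rightarrow> qmat) \<Rightarrow> bool" where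
  "CPTP E \<longleftrightarrow> qlinear E \<and> psd (choi E) \<and> (\<forall>X. trace (E X) = trace X)"

definition Vmap :: "real \<Rightarrow> real \<Rightarrow> real \<Rightarrow> real \<Rightarrow> qmat \<Rightarrow> qmat" where
  "Vmap \<alpha> c t s = Lambda \<alpha> c t \<circ> inv (Lambda \<alpha> c s)"

end

theory Submission
  imports Defs
begin

(* A Pauli channel with equal bit-flip and bit-phase-flip weights is diagonal in the Pauli basis,
   with eigenvalues G, G, L on \<sigma>\<^sub>1, \<sigma>\<^sub>2, \<sigma>\<^sub>3 (phase_cov G L below). These maps compose by
   multiplying eigenvalues, so V\<^sub>t\<^sub>,\<^sub>s is again such a map, with G = \<Gamma>\<^sub>t\<^sub>,\<^sub>s\<^sup>\<alpha> and L = \<lambda>\<^sub>t\<^sub>-\<^sub>s\<^sup>2\<^sup>\<alpha>,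
   and its Choi matrix is read off entrywise. For the decomposition, the map with eigenvalues
   (G, G, L) is the convex combination with weight (1 + L)/2 of the map with eigenvalues (k, k, 1),
   which is completely positive iff \<bar>k\<bar> \<le> 1, and of X \<mapsto> \<sigma>\<^sub>1 X\<^sup>T \<sigma>\<^sub>1, whose eigenvalues are
   (1, 1, -1). Since 0 < \<Gamma>\<^sub>t\<^sub>,\<^sub>s \<le> 1, the resulting k = (L + 2G - 1)/(1 + L) lies in [-1, 1]. *)

lemma two_cases: "(x::2) = 0 \<or> x = 1"
  using exhaust_2[of x] by auto

lemma sum_UNIV_2: "sum f (UNIV::2 set) = f 0 + f 1"
proof -
  have "(2::2) = 0" by simp
  then show ?thesis using sum_2[of f] by (simp only:) (simp add: add.commute)
qed

lemma sum_UNIV_2x2: "sum f (UNIV::(2\<times>2) set) = f (0,0) + f (0,1) + f (1,0) + f (1,1)"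
proof -
  have UNIV_eq: "(UNIV::(2\<times>2) set) = {(0,0),(0,1),(1,0),(1,1)}"
    using two_cases by auto
  show ?thesis unfolding UNIV_eq by (simp add: add.assoc)
qed

lemma all_2: "(\<forall>i::2. P i) \<longleftrightarrow> P 0 \<and> P 1"
  using two_cases by metis

lemma all_2x2: "(\<forall>x::2\<times>2. P x) \<longleftrightarrow> P (0,0) \<and> P (0,1) \<and> P (1,0) \<and> P (1,1)"
  by (simp add: split_paired_All all_2)

lemma matrix_eqI: "(\<And>i j. A $ i $ j = B $ i $ j) \<Longrightarrow> A = B"
  by (simp add: vec_eq_iff)

definition phase_cov :: "real \<Rightarrow> real \<Rightarrow> qmat \<Rightarrow> qmat" where
  "phase_cov G L X = (\<chi> i j.
     if i = j then
       (if i = 0 then of_real ((1 + L)/2) * X$0$0 + of_real ((1 - L)/2) * X$1$1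
        else of_real ((1 - L)/2) * X$0$0 + of_real ((1 + L)/2) * X$1$1)
     else of_real G * X$i$j)"

lemma pauli_sum_eq:
  fixes q :: "nat \<Rightarrow> real"
  shows "(\<Sum>\<mu><4. q \<mu> *\<^sub>R (sigma \<mu> ** X ** sigma \<mu>)) =
   (\<chi> i j. if i = j then
             (if i = 0 then of_real (q 0 + q 3) * X$0$0 + of_real (q 1 + q 2) * X$1$1
              else of_real (q 1 + q 2) * X$0$0 + of_real (q 0 + q 3) * X$1$1)
           else if i = 0 then of_real (q 0 - q 3) * X$0$1 + of_real (q 1 - q 2) * X$1$0
           else of_real (q 0 - q 3) * X$1$0 + of_real (q 1 - q 2) * X$0$1)"
  (is "_ = ?rhs")
proof -
  have "(\<Sum>\<mu><4. q \<mu> *\<^sub>R (sigma \<mu> ** X ** sigma \<mu>)) =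
     q 0 *\<^sub>R (sigma 0 ** X ** sigma 0) + q 1 *\<^sub>R (sigma 1 ** X ** sigma 1) +
     q 2 *\<^sub>R (sigma 2 ** X ** sigma 2) + q 3 *\<^sub>R (sigma 3 ** X ** sigma 3)"
    by (simp add: eval_nat_numeral)
  also have "\<dots> = ?rhs"
  proof (rule matrix_eqI)
    fix i j :: 2
    show "(q 0 *\<^sub>R (sigma 0 ** X ** sigma 0) + q 1 *\<^sub>R (sigma 1 ** X ** sigma 1) +
       q 2 *\<^sub>R (sigma 2 ** X ** sigma 2) + q 3 *\<^sub>R (sigma 3 ** X ** sigma 3)) $ i $ j = ?rhs $ i $ j"
      using two_cases[of i] two_cases[of j]
      by (auto simp: matrix_matrix_mult_def sigma_def sum_UNIV_2;
          simp add: scaleR_conv_of_real algebra_simps)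
  qed
  finally show ?thesis .
qed

lemma pauli_sum_eq_phase_cov:
  fixes q :: "nat \<Rightarrow> real"
  assumes "q 1 = q 2" and "q 0 + q 1 + q 2 + q 3 = 1"
  shows "(\<Sum>\<mu><4. q \<mu> *\<^sub>R (sigma \<mu> ** X ** sigma \<mu>)) = phase_cov (q 0 - q 3) (q 0 + q 3 - q 1 - q 2) X"
proof -
  define G L where "G = q 0 - q 3" and "L = q 0 + q 3 - q 1 - q 2"
  have coeffs: "q 0 + q 3 = (1 + L)/2" "q 1 + q 2 = (1 - L)/2" "q 1 - q 2 = 0"
    using assms unfolding L_def by simp_all
  show ?thesis
    unfolding G_def [symmetric] L_def [symmetric]
  proof (rule matrix_eqI)
    fix i j :: 2
    show "(\<Sum>\<mu><4. q \<mu> *\<^sub>R (sigma \<mu> ** X ** sigma \<mu>)) $ i $ j = phase_cov G L X $ i $ j"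
      unfolding pauli_sum_eq vec_lambda_beta coeffs
      using two_cases[of i] two_cases[of j] by (auto simp: phase_cov_def G_def)
  qed
qed

lemma phase_cov_comp: "phase_cov G L (phase_cov G' L' X) = phase_cov (G * G') (L * L') X"
proof (rule matrix_eqI)
  fix i j :: 2
  show "phase_cov G L (phase_cov G' L' X) $ i $ j = phase_cov (G * G') (L * L') X $ i $ j"
    using two_cases[of i] two_cases[of j]
    by (auto simp: phase_cov_def; simp add: field_simps; simp add: algebra_simps)
qed

lemma phase_cov_1_1: "phase_cov 1 1 X = X"
  by (rule matrix_eqI) (use two_cases in \<open>auto simp: phase_cov_def\<close>)

lemma
  assumes "G \<noteq> 0" and "L \<noteq> 0"
  shows bij_phase_cov: "bij (phase_cov G L)"
    and inv_phase_cov: "inv (phase_cov G L) = phase_cov (1/G) (1/L)"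
proof -
  have "phase_cov G L \<circ> phase_cov (1/G) (1/L) = id" "phase_cov (1/G) (1/L) \<circ> phase_cov G L = id"
    using assms by (auto simp: fun_eq_iff phase_cov_comp phase_cov_1_1)
  then show "bij (phase_cov G L)" "inv (phase_cov G L) = phase_cov (1/G) (1/L)"
    by (auto intro: o_bij inv_unique_comp)
qed

lemma sqrt2_outer: "2 * (u / complex_of_real (sqrt 2)) * cnj (v / complex_of_real (sqrt 2)) = u * cnj v"
proof -
  have "complex_of_real (sqrt 2) * complex_of_real (sqrt 2) = 2"
    by (simp flip: of_real_mult)
  then show ?thesis by (simp add: field_simps)
qed

lemma proj_Phi_p_entry: "proj Phi_p $ x $ y = (if fst x = snd x \<and> fst y = snd y then 1 else 0)"
  by (simp add: proj_def Phi_p_def sqrt2_outer[of 1 1, simplified])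

lemma proj_Phi_m_entry:
  "proj Phi_m $ x $ y =
     (if fst x = snd x \<and> fst y = snd y then (if fst x = fst y then 1 else -1) else 0)"
  using two_cases[of "fst x"] two_cases[of "fst y"] sqrt2_outer[of 1 1] sqrt2_outer[of 1 "-1"]
    sqrt2_outer[of "-1" 1] sqrt2_outer[of "-1" "-1"]
  by (auto simp: proj_def Phi_m_def)

lemma ptrans_proj_Psi_p_entry:
  "ptrans (proj Psi_p) $ x $ y = (if fst x \<noteq> snd y \<and> fst y \<noteq> snd x then 1 else 0)"
  by (simp add: ptrans_def proj_def Psi_p_def sqrt2_outer[of 1 1, simplified])

lemma choi_entry: "choi E $ x $ y = E (\<chi> i j. if i = snd x \<and> j = snd y then 1 else 0) $ fst x $ fst y"
  unfolding choi_def map_id_def by (simp add: proj_Phi_p_entry)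

lemma choi_phase_cov:
  "choi (phase_cov G L) = ((L + G)/2) *\<^sub>R proj Phi_p + ((1 - G)/2) *\<^sub>R proj Phi_m
     + (1 - (L + G)/2 - (1 - G)/2) *\<^sub>R ptrans (proj Psi_p)"
proof -
  have "\<forall>x y. choi (phase_cov G L) $ x $ y = (((L + G)/2) *\<^sub>R proj Phi_p + ((1 - G)/2) *\<^sub>R proj Phi_m
     + (1 - (L + G)/2 - (1 - G)/2) *\<^sub>R ptrans (proj Psi_p)) $ x $ y"
    unfolding all_2x2
    by (simp add: choi_entry proj_Phi_p_entry proj_Phi_m_entry ptrans_proj_Psi_p_entry phase_cov_def;
        simp add: scaleR_conv_of_real field_simps)
  then show ?thesis by (simp add: vec_eq_iff)
qed

definition bit_flip :: "qmat \<Rightarrow> qmat" where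
  "bit_flip Y = (\<chi> i j. Y $ (1 - i) $ (1 - j))"

lemma qlinear_phase_cov: "qlinear (phase_cov G L)"
  unfolding qlinear_def
proof (intro allI conjI; rule matrix_eqI)
  fix a X Y i j
  show "phase_cov G L (X + Y) $ i $ j = (phase_cov G L X + phase_cov G L Y) $ i $ j"
       "phase_cov G L (cscale a X) $ i $ j = cscale a (phase_cov G L X) $ i $ j"
    using two_cases[of i] two_cases[of j] by (auto simp: phase_cov_def cscale_def algebra_simps)
qed

lemma qlinear_bit_flip: "qlinear bit_flip"
  unfolding qlinear_def by (auto intro!: matrix_eqI simp: bit_flip_def cscale_def)

lemma trace_phase_cov: "trace (phase_cov G L X) = trace X"
  by (simp add: trace_def sum_UNIV_2 phase_cov_def; simp add: field_simps flip: of_real_add)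

lemma trace_bit_flip: "trace (bit_flip X) = trace X"
  by (simp add: trace_def sum_UNIV_2 bit_flip_def)

lemma quadratic_form_nonneg:
  fixes k x y :: real
  assumes "\<bar>k\<bar> \<le> 1"
  shows "0 \<le> x * x + y * y + 2 * k * x * y"
proof -
  have "\<bar>2 * k * x * y\<bar> \<le> 2 * \<bar>x * y\<bar>"
    using assms by (simp add: abs_mult mult_left_le_one_le mult_le_cancel_right1)
  moreover have "2 * \<bar>x * y\<bar> \<le> x * x + y * y"
    using sum_squares_bound[of "\<bar>x\<bar>" "\<bar>y\<bar>"]
    by (simp add: abs_mult abs_mult_self_eq power2_eq_square mult.assoc)
  ultimately show ?thesis by linarith
qed

lemma psd_choi_phase_cov:
  assumes "\<bar>k\<bar> \<le> 1"
  shows "psd (choi (phase_cov k 1))"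
  unfolding psd_def Let_def
proof
  fix v :: "complex^(2\<times>2)"
  define a where "a = v $ (0,0)"
  define b where "b = v $ (1,1)"
  have form: "(\<Sum>i\<in>UNIV. \<Sum>j\<in>UNIV. cnj (v $ i) * choi (phase_cov k 1) $ i $ j * v $ j)
     = cnj a * a + cnj b * b + of_real k * (cnj a * b + cnj b * a)"
    unfolding a_def b_def
    by (simp add: sum_UNIV_2x2 choi_entry phase_cov_def; simp add: algebra_simps)
  have "0 \<le> Re a * Re a + Re b * Re b + 2 * k * Re a * Re b"
       "0 \<le> Im a * Im a + Im b * Im b + 2 * k * Im a * Im b"
    using assms by (simp_all add: quadratic_form_nonneg)
  then show "Im (\<Sum>i\<in>UNIV. \<Sum>j\<in>UNIV. cnj (v $ i) * choi (phase_cov k 1) $ i $ j * v $ j) = 0 \<and>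
          0 \<le> Re (\<Sum>i\<in>UNIV. \<Sum>j\<in>UNIV. cnj (v $ i) * choi (phase_cov k 1) $ i $ j * v $ j)"
    unfolding form by (simp add: algebra_simps)
qed

lemma psd_choi_bit_flip: "psd (choi bit_flip)"
  unfolding psd_def Let_def
proof
  fix v :: "complex^(2\<times>2)"
  define w where "w = v $ (0,1) + v $ (1,0)"
  have "(\<Sum>i\<in>UNIV. \<Sum>j\<in>UNIV. cnj (v $ i) * choi bit_flip $ i $ j * v $ j) = cnj w * w"
    unfolding w_def by (simp add: sum_UNIV_2x2 choi_entry bit_flip_def; simp add: algebra_simps)
  then show "Im (\<Sum>i\<in>UNIV. \<Sum>j\<in>UNIV. cnj (v $ i) * choi bit_flip $ i $ j * v $ j) = 0 \<and>
          0 \<le> Re (\<Sum>i\<in>UNIV. \<Sum>j\<in>UNIV. cnj (v $ i) * choi bit_flip $ i $ j * v $ j)"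
    by simp
qed

lemma CPTP_phase_cov: "\<bar>k\<bar> \<le> 1 \<Longrightarrow> CPTP (phase_cov k 1)"
  unfolding CPTP_def using qlinear_phase_cov psd_choi_phase_cov trace_phase_cov by blast

lemma CPTP_bit_flip: "CPTP bit_flip"
  unfolding CPTP_def using qlinear_bit_flip psd_choi_bit_flip trace_bit_flip by blast

lemma phase_cov_eq_convex_transpose:
  assumes "L \<noteq> -1"
  shows "phase_cov G L X =
    ((1 + L)/2) *\<^sub>R phase_cov ((L + 2*G - 1)/(1 + L)) 1 X + (1 - (1 + L)/2) *\<^sub>R bit_flip (transpose X)"
proof -
  define p k where "p = (1 + L)/2" and "k = (L + 2*G - 1)/(1 + L)"
  have "1 + L \<noteq> 0" using assms by linarith
  then have coeff: "p * k + (1 - p) = G"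
    unfolding p_def k_def by (simp add: field_simps)
  have off_diag: "of_real G * x = p *\<^sub>R (of_real k * x) + (1 - p) *\<^sub>R x" for x :: complex
  proof -
    have "(p * k + (1 - p)) *\<^sub>R x = p *\<^sub>R (of_real k * x) + (1 - p) *\<^sub>R x"
      by (simp add: scaleR_conv_of_real algebra_simps)
    then show ?thesis unfolding coeff by (simp add: scaleR_conv_of_real)
  qed
  have "phase_cov G L X = p *\<^sub>R phase_cov k 1 X + (1 - p) *\<^sub>R bit_flip (transpose X)"
  proof (rule matrix_eqI)
    fix i j :: 2
    show "phase_cov G L X $ i $ j = (p *\<^sub>R phase_cov k 1 X + (1 - p) *\<^sub>R bit_flip (transpose X)) $ i $ j"
      using two_cases[of i] two_cases[of j]
      by (auto simp: phase_cov_def bit_flip_def transpose_def off_diag;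
          simp add: p_def scaleR_conv_of_real field_simps)
  qed
  then show ?thesis unfolding p_def k_def .
qed

lemma phase_cov_convex_transpose:
  assumes "0 \<le> G" "G \<le> 1" "0 \<le> L" "L \<le> 1"
  shows "\<exists>p E1 E2. 0 \<le> p \<and> p \<le> 1 \<and> CPTP E1 \<and> CPTP E2 \<and>
           (\<forall>X. phase_cov G L X = p *\<^sub>R E1 X + (1 - p) *\<^sub>R E2 (transpose X))"
proof (intro exI conjI allI)
  have "\<bar>L + 2*G - 1\<bar> \<le> 1 + L" using assms by linarith
  then show "CPTP (phase_cov ((L + 2*G - 1)/(1 + L)) 1)"
    using assms by (intro CPTP_phase_cov) (simp add: abs_divide divide_le_eq_1)
  show "phase_cov G L X = ((1 + L)/2) *\<^sub>R phase_cov ((L + 2*G - 1)/(1 + L)) 1 X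
      + (1 - (1 + L)/2) *\<^sub>R bit_flip (transpose X)" for X
    using assms by (intro phase_cov_eq_convex_transpose) linarith
qed (use assms CPTP_bit_flip in auto)

lemma exp_cosh_eq: "exp (-x) * cosh x = (1 + exp (-2*x)) / 2" for x :: real
proof -
  have "exp (-x) * exp x = 1" "exp (-x) * exp (-x) = exp (-2*x)"
    by (simp_all flip: exp_add)
  then show ?thesis by (simp add: cosh_def field_simps)
qed

lemma Lambda_eq_phase_cov:
  "Lambda \<alpha> c t = phase_cov ((exp (- (c * t)) * cosh (c * t)) powr \<alpha>) (exp (-2*\<alpha>*c * t))"
proof -
  let ?q = "\<lambda>\<mu>. pauli_p \<alpha> c \<mu> t"
  have "exp (\<alpha>*(c * t)) * exp (-(\<alpha>*(c*(t*2)))) = exp (-(\<alpha>*(c * t)))"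
    by (simp flip: exp_add)
  then have "?q 0 - ?q 3 = exp (-\<alpha>*c * t) * cosh (c * t) powr \<alpha>"
    by (simp add: pauli_p_def field_simps)
  also have "\<dots> = (exp (- (c * t)) * cosh (c * t)) powr \<alpha>"
    by (simp add: powr_mult exp_powr_real mult_ac)
  finally have G: "?q 0 - ?q 3 = (exp (- (c * t)) * cosh (c * t)) powr \<alpha>" .
  have L: "?q 0 + ?q 3 - ?q 1 - ?q 2 = exp (-2*\<alpha>*c * t)"
    by (simp add: pauli_p_def field_simps)
  have weights: "?q 1 = ?q 2" "?q 0 + ?q 1 + ?q 2 + ?q 3 = 1"
    by (simp_all add: pauli_p_def field_simps)
  show ?thesis
    by (intro ext) (simp only: Lambda_def pauli_sum_eq_phase_cov [OF weights] G L)
qed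

lemma bij_Lambda: "bij (Lambda \<alpha> c t)"
  unfolding Lambda_eq_phase_cov by (rule bij_phase_cov) simp_all

lemma decay_ratio_eq:
  fixes c s t :: real
  shows "exp (- c * (t - s)) * cosh (c * t) / cosh (c * s)
     = (exp (- (c * t)) * cosh (c * t)) / (exp (- (c * s)) * cosh (c * s))"
proof -
  have "exp (- c * (t - s)) = exp (- (c * t)) / exp (- (c * s))"
    unfolding exp_diff [symmetric] by (rule arg_cong [where f = exp]) (simp add: algebra_simps)
  then show ?thesis by simp
qed

lemma Vmap_eq_phase_cov:
  "Vmap \<alpha> c t s = phase_cov ((exp (- c * (t - s)) * cosh (c * t) / cosh (c * s)) powr \<alpha>)
                             (exp (- c * (t - s)) powr (2 * \<alpha>))"
proof -
  define g where "g x = exp (- (c*x)) * cosh (c*x)" for x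
  have "g s > 0" unfolding g_def by simp
  then have "g s powr \<alpha> \<noteq> 0" "exp (-2*\<alpha>*c * s) \<noteq> 0" by simp_all
  then have "Vmap \<alpha> c t s = phase_cov ((g t) powr \<alpha> / (g s) powr \<alpha>) (exp (-2*\<alpha>*c * t) / exp (-2*\<alpha>*c * s))"
    unfolding Vmap_def Lambda_eq_phase_cov g_def[symmetric]
    by (simp add: inv_phase_cov fun_eq_iff phase_cov_comp)
  also have "(g t) powr \<alpha> / (g s) powr \<alpha> = (exp (- c * (t - s)) * cosh (c * t) / cosh (c * s)) powr \<alpha>"
    unfolding decay_ratio_eq g_def by (simp add: powr_divide)
  also have "exp (-2*\<alpha>*c * t) / exp (-2*\<alpha>*c * s) = exp (- c * (t - s)) powr (2 * \<alpha>)"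
    by (simp add: exp_powr_real exp_diff [symmetric] algebra_simps)
  finally show ?thesis .
qed

lemma decay_ratio_bounds:
  fixes c s t :: real
  assumes "0 \<le> c" "0 \<le> s" "s \<le> t"
  shows "0 < exp (- c * (t - s)) * cosh (c * t) / cosh (c * s)"
    and "exp (- c * (t - s)) * cosh (c * t) / cosh (c * s) \<le> 1"
proof -
  have "exp (- c * (t - s)) * cosh (c * t) / cosh (c * s)
      = (exp (- (c * t)) * cosh (c * t)) / (exp (- (c * s)) * cosh (c * s))"
    by (rule decay_ratio_eq)
  moreover have "exp (- (c * t)) * cosh (c * t) \<le> exp (- (c * s)) * cosh (c * s)"
    unfolding exp_cosh_eq using assms by (simp add: mult_left_mono)
  ultimately show "exp (- c * (t - s)) * cosh (c * t) / cosh (c * s) \<le> 1"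
    by simp
  show "0 < exp (- c * (t - s)) * cosh (c * t) / cosh (c * s)"
    by simp
qed

theorem mainTheorem10:
  fixes \<alpha> c :: real
  assumes "\<alpha> \<ge> 1" and "c > 0"
  shows "(\<forall>t\<ge>0. bij (Lambda \<alpha> c t)) \<and>
    (\<forall>s t. 0 \<le> s \<and> s \<le> t \<longrightarrow>
      (let lam = (\<lambda>\<tau>. exp (- c * \<tau>));
           \<Gamma> = lam (t - s) * cosh (c * t) / cosh (c * s);
           p1 = (lam (t - s) powr (2 * \<alpha>) + \<Gamma> powr \<alpha>) / 2;
           p2 = (1 - \<Gamma> powr \<alpha>) / 2
       in choi (Vmap \<alpha> c t s) =
            p1 *\<^sub>R proj Phi_p + p2 *\<^sub>R proj Phi_m + (1 - p1 - p2) *\<^sub>R ptrans (proj Psi_p)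
          \<and> p1 \<ge> 0 \<and> p2 \<ge> 0 \<and> p1 + p2 \<le> 1
          \<and> (\<exists>p E1 E2. 0 \<le> p \<and> p \<le> 1 \<and> CPTP E1 \<and> CPTP E2 \<and>
               (\<forall>X. Vmap \<alpha> c t s X = p *\<^sub>R E1 X + (1 - p) *\<^sub>R E2 (transpose X)))))"
proof (intro conjI allI impI bij_Lambda, elim conjE)
  fix s t :: real
  assume "0 \<le> s" "s \<le> t"
  define \<Gamma> where "\<Gamma> = exp (- c * (t - s)) * cosh (c * t) / cosh (c * s)"
  define L where "L = exp (- c * (t - s)) powr (2 * \<alpha>)"
  have "0 < \<Gamma>" "\<Gamma> \<le> 1"
    unfolding \<Gamma>_def using decay_ratio_bounds \<open>0 \<le> s\<close> \<open>s \<le> t\<close> assms(2) by auto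
  then have G: "0 < \<Gamma> powr \<alpha>" "\<Gamma> powr \<alpha> \<le> 1"
    using assms(1) by (auto intro: powr_le1)
  have "0 < L" "L \<le> 1"
    unfolding L_def exp_powr_real using \<open>s \<le> t\<close> assms
    by (simp_all add: mult_nonpos_nonneg)
  with G have p_bounds: "0 \<le> (L + \<Gamma> powr \<alpha>)/2" "0 \<le> (1 - \<Gamma> powr \<alpha>)/2"
      "(L + \<Gamma> powr \<alpha>)/2 + (1 - \<Gamma> powr \<alpha>)/2 \<le> 1"
    by (simp_all add: field_simps)
  have "\<exists>p E1 E2. 0 \<le> p \<and> p \<le> 1 \<and> CPTP E1 \<and> CPTP E2 \<and>
      (\<forall>X. phase_cov (\<Gamma> powr \<alpha>) L X = p *\<^sub>R E1 X + (1 - p) *\<^sub>R E2 (transpose X))"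
    using G \<open>0 < L\<close> \<open>L \<le> 1\<close> by (intro phase_cov_convex_transpose) simp_all
  with p_bounds show "let lam = (\<lambda>\<tau>. exp (- c * \<tau>)); \<Gamma> = lam (t - s) * cosh (c * t) / cosh (c * s);
           p1 = (lam (t - s) powr (2 * \<alpha>) + \<Gamma> powr \<alpha>) / 2; p2 = (1 - \<Gamma> powr \<alpha>) / 2
       in choi (Vmap \<alpha> c t s) =
            p1 *\<^sub>R proj Phi_p + p2 *\<^sub>R proj Phi_m + (1 - p1 - p2) *\<^sub>R ptrans (proj Psi_p)
          \<and> p1 \<ge> 0 \<and> p2 \<ge> 0 \<and> p1 + p2 \<le> 1
          \<and> (\<exists>p E1 E2. 0 \<le> p \<and> p \<le> 1 \<and> CPTP E1 \<and> CPTP E2 \<and>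
               (\<forall>X. Vmap \<alpha> c t s X = p *\<^sub>R E1 X + (1 - p) *\<^sub>R E2 (transpose X)))"
    unfolding Let_def Vmap_eq_phase_cov \<Gamma>_def[symmetric] L_def[symmetric]
    by (simp only: choi_phase_cov add.commute)
qed

end
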